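(* Let $H=E_0|E_0\rangle\langle E_0|+E_1|E_1\rangle\langle E_1|$ be a non-degenerate Hamiltonian on a qubit ($E_0\ne E_1$, $\{|E_0\rangle,|E_1\rangle\}$ orthonormal), and let $|\psi_0\rangle=c_0|E_0\rangle+c_1|E_1\rangle$ with $|c_0|^2+|c_1|^2=1$. Let $\{|k_n\rangle\}_n$ be the Krylov basis generated from $|k_0\rangle=|\psi_0\rangle$ and $H$ by the Lanczos algorithm, and let $K(t)=\sum_n n|\langle k_n|e^{-iHt}|\psi_0\rangle|^2$ be the spread complexity. Then for all $t$, $$K(t)=C_{\ell_1}^2\sin^2\!\left(\frac{\omega t}{2}\right),$$ where $\omega=E_1-E_0$ and $C_{\ell_1}=2|c_0||c_1|$ is the $\ell_1$-norm of coherence of $|\psi_0\rangle$ in the basis $\{|E_0\rangle,|E_1\rangle\}$. *)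

theory Defs
  imports "HOL-Analysis.Analysis"
begin

type_synonym qubit = "complex ^ 2"

definition cinner :: "qubit \<Rightarrow> qubit \<Rightarrow> complex" where
  "cinner x y = (\<Sum>i\<in>UNIV. cnj (x $ i) * y $ i)"

definition hnorm :: "qubit \<Rightarrow> real" where
  "hnorm x = sqrt (Re (cinner x x))"

definition hamiltonian :: "real \<Rightarrow> real \<Rightarrow> qubit \<Rightarrow> qubit \<Rightarrow> qubit \<Rightarrow> qubit" where
  "hamiltonian E0 E1 e0 e1 v =
     (complex_of_real E0 * cinner e0 v) *s e0 + (complex_of_real E1 * cinner e1 v) *s e1"

definition evolve :: "(qubit \<Rightarrow> qubit) \<Rightarrow> real \<Rightarrow> qubit \<Rightarrow> qubit" where
  "evolve H t v = (\<Sum>n. ((- \<i> * complex_of_real t) ^ n / of_nat (fact n)) *s ((H ^^ n) v))"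

text \<open>State at step n: (k_{n-1}, k_n, b_n), with k_{-1} = 0, b_0 = 0.
  a_n = <k_n|H|k_n>, A_{n+1} = (H - a_n) k_n - b_n k_{n-1}, b_{n+1} = ||A_{n+1}||,
  k_{n+1} = A_{n+1} / b_{n+1}. When b_{n+1} = 0 the algorithm terminates; we then
  set all later Krylov vectors to 0, so they contribute nothing.\<close>
fun lanczos :: "(qubit \<Rightarrow> qubit) \<Rightarrow> qubit \<Rightarrow> nat \<Rightarrow> qubit \<times> qubit \<times> real" where
  "lanczos H psi 0 = (0, psi, 0)"
| "lanczos H psi (Suc n) =
     (case lanczos H psi n of (kp, k, b) \<Rightarrow>
        (let a = cinner k (H k);
             A = H k - a *s k - complex_of_real b *s kp;
             b' = hnorm A
         in (k, if b' = 0 then 0 else complex_of_real (1 / b') *s A, b')))"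

definition krylov :: "(qubit \<Rightarrow> qubit) \<Rightarrow> qubit \<Rightarrow> nat \<Rightarrow> qubit" where
  "krylov H psi n = fst (snd (lanczos H psi n))"

definition spread_complexity :: "(qubit \<Rightarrow> qubit) \<Rightarrow> qubit \<Rightarrow> real \<Rightarrow> real" where
  "spread_complexity H psi t =
     (\<Sum>n. real n * (cmod (cinner (krylov H psi n) (evolve H t psi)))\<^sup>2)"

definition l1_coherence :: "qubit \<Rightarrow> qubit \<Rightarrow> qubit \<Rightarrow> real" where
  "l1_coherence e0 e1 psi =
     (let b = (\<lambda>i::nat. if i = 0 then e0 else e1);
          rho = (\<lambda>i j. cinner (b i) psi * cnj (cinner (b j) psi))
      in (\<Sum>i\<in>{0,1::nat}. \<Sum>j\<in>{0,1::nat}. if i \<noteq> j then cmod (rho i j) else 0))"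

end

theory Submission
  imports Defs
begin

(* In the eigenbasis the Lanczos recursion only sees the moduli x = |c0| and y = |c1|.
   The first residual (H - <H>) psi has coordinates (-omega y^2 c0, omega x^2 c1), hence
   norm b1 = |omega| x y.  If b1 = 0 (psi is an eigenvector, or E0 = E1) the recursion stops
   at once and both sides vanish.  Otherwise the second residual vanishes, as it must in a
   two-dimensional space, so the Krylov basis is {psi, k1} and
   K(t) = |<k1| e^(-iHt) psi>|^2 = (omega x^2 y^2 / b1)^2 |e^(-i E1 t) - e^(-i E0 t)|^2
        = x^2 y^2 * 4 sin^2(omega t / 2), which is the claim since the coherence is 2 x y. *)

lemma vec_nth_sum: "(sum f S) $ i = (\<Sum>x\<in>S. f x $ i)"
  by (metis sum_eq vec_lambda_beta)

lemma sums_vector_smult: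
  fixes v :: "'a::real_normed_field ^ 'n"
  assumes "a sums A"
  shows "(\<lambda>n. a n *s v) sums (A *s v)"
  unfolding sums_def
proof (rule vec_tendstoI)
  fix i
  have "(\<lambda>m. (\<Sum>n<m. a n) * v $ i) \<longlonglongrightarrow> A * v $ i"
    using assms unfolding sums_def by (intro tendsto_mult_right)
  then show "(\<lambda>m. (\<Sum>n<m. a n *s v) $ i) \<longlonglongrightarrow> (A *s v) $ i"
    by (simp add: vec_nth_sum sum_distrib_right)
qed

lemma exp_series_scaled:
  fixes t E :: real and c :: complex
  shows "(\<lambda>n. (- \<i> * of_real t) ^ n / of_nat (fact n) * (of_real E ^ n * c))
    sums (exp (- \<i> * of_real (t * E)) * c)"
proof -
  have "(\<lambda>n. (- \<i> * of_real (t * E)) ^ n /\<^sub>R fact n * c) sums (exp (- \<i> * of_real (t * E)) * c)"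
    by (intro sums_mult2 exp_converges)
  moreover have "(- \<i> * of_real (t * E)) ^ n /\<^sub>R fact n * c
      = (- \<i> * of_real t) ^ n / of_nat (fact n) * (of_real E ^ n * c)" for n
  proof -
    have "- \<i> * of_real (t * E) = (- \<i> * of_real t) * of_real E" by simp
    then show ?thesis
      by (simp only: power_mult_distrib) (simp add: scaleR_conv_of_real divide_inverse mult_ac)
  qed
  ultimately show ?thesis by simp
qed

lemma cmod_exp_diff_sq:
  fixes a b :: real
  shows "(cmod (exp (- \<i> * of_real a) - exp (- \<i> * of_real b)))\<^sup>2 = 4 * (sin ((a - b) / 2))\<^sup>2"
proof -
  have "(cmod (exp (- \<i> * of_real a) - exp (- \<i> * of_real b)))\<^sup>2
      = (cos a - cos b)\<^sup>2 + (sin b - sin a)\<^sup>2"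
    by (simp add: cmod_power2 exp_minus_Euler Euler)
  also have "\<dots> = (sin a ^ 2 + cos a ^ 2) + (sin b ^ 2 + cos b ^ 2) - 2 * (cos a * cos b + sin a * sin b)"
    by (simp add: power2_diff algebra_simps)
  also have "\<dots> = 2 - 2 * cos (a - b)"
    by (simp add: cos_diff)
  also have "cos (a - b) = 1 - 2 * (sin ((a - b) / 2))\<^sup>2"
    by (metis cos_double_sin field_sum_of_halves mult_2)
  also have "2 - 2 * (1 - 2 * (sin ((a - b) / 2))\<^sup>2) = 4 * (sin ((a - b) / 2))\<^sup>2"
    by simp
  finally show ?thesis .
qed

lemma cinner_add_left: "cinner (x + y) z = cinner x z + cinner y z"
  by (simp add: cinner_def sum.distrib ring_distribs)

lemma cinner_add_right: "cinner x (y + z) = cinner x y + cinner x z"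
  by (simp add: cinner_def sum.distrib ring_distribs)

lemma cinner_smult_left: "cinner (a *s x) y = cnj a * cinner x y"
  by (simp add: cinner_def sum_distrib_left mult.assoc)

lemma cinner_smult_right: "cinner x (a *s y) = a * cinner x y"
  by (simp add: cinner_def sum_distrib_left mult.left_commute)

lemma cinner_commute: "cinner y x = cnj (cinner x y)"
  by (simp add: cinner_def mult.commute)

lemma cmod_of_real_mult: "cmod (complex_of_real r * c) = \<bar>r\<bar> * cmod c"
  by (simp add: norm_mult)

lemma cnj_mult_self: "cnj z * z = complex_of_real ((cmod z)\<^sup>2)"
  by (metis complex_norm_square mult.commute of_real_power)

lemma cnj_of_real_mult_mult: "cnj (of_real r * c) * (z * c) = of_real (r * (cmod c)\<^sup>2) * z"
proof -
  have "cnj (of_real r * c) * (z * c) = of_real r * z * (cnj c * c)"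
    by (simp add: mult_ac)
  also have "\<dots> = of_real r * z * of_real ((cmod c)\<^sup>2)"
    by (simp only: cnj_mult_self)
  also have "\<dots> = of_real (r * (cmod c)\<^sup>2) * z"
    by (simp add: mult_ac)
  finally show ?thesis .
qed

lemma hnorm_zero [simp]: "hnorm 0 = 0"
  by (simp add: hnorm_def cinner_def)

lemma hamiltonian_zero [simp]: "hamiltonian E0 E1 e0 e1 0 = 0"
  by (simp add: hamiltonian_def cinner_def)

definition lanczos_residual :: "(qubit \<Rightarrow> qubit) \<Rightarrow> qubit \<Rightarrow> qubit \<Rightarrow> real \<Rightarrow> qubit" where
  "lanczos_residual H kp k b = H k - cinner k (H k) *s k - complex_of_real b *s kp"

lemma lanczos_Suc_eq:
  assumes "lanczos H psi n = (kp, k, b)" and "hnorm (lanczos_residual H kp k b) = b'"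
  shows "lanczos H psi (Suc n) =
    (k, if b' = 0 then 0 else complex_of_real (1 / b') *s lanczos_residual H kp k b, b')"
  using assms by (simp add: lanczos_residual_def Let_def)

declare lanczos.simps(2) [simp del]

lemma krylov_eq_0_from:
  assumes "H 0 = 0" and "lanczos H psi m = (kp, 0, 0)" and "m \<le> n"
  shows "krylov H psi n = 0"
proof -
  have "\<exists>kp. lanczos H psi n = (kp, 0, 0)"
    using assms(3)
  proof (induction n rule: dec_induct)
    case base
    then show ?case using assms(2) by blast
  next
    case (step n)
    then obtain kp where "lanczos H psi n = (kp, 0, 0)" by blast
    moreover have "lanczos_residual H kp 0 0 = 0"
      using assms(1) by (simp add: lanczos_residual_def)
    ultimately have "lanczos H psi (Suc n) = (0, 0, 0)"
      by (simp add: lanczos_Suc_eq)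
    then show ?case by blast
  qed
  then show ?thesis by (auto simp: krylov_def)
qed

lemma spread_complexity_krylov_vanishing_from_2:
  assumes "\<And>n. 2 \<le> n \<Longrightarrow> krylov H psi n = 0"
  shows "spread_complexity H psi t = (cmod (cinner (krylov H psi 1) (evolve H t psi)))\<^sup>2"
proof -
  let ?f = "\<lambda>n. real n * (cmod (cinner (krylov H psi n) (evolve H t psi)))\<^sup>2"
  have "?f = (\<lambda>n. if n = 1 then ?f n else 0)"
  proof
    fix n
    show "?f n = (if n = 1 then ?f n else 0)"
      using assms[of n] by (cases "n \<le> 1") (auto simp: le_Suc_eq cinner_def)
  qed
  moreover have "(\<lambda>n. if n = 1 then ?f n else 0) sums ?f 1"
    by (rule sums_single)
  ultimately have "?f sums ?f 1"
    by simp
  from sums_unique[OF this] show ?thesis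
    unfolding spread_complexity_def by simp
qed

lemma two_level_lanczos_coefficients:
  fixes E0 E1 x y b u v :: real
  assumes norm: "x\<^sup>2 + y\<^sup>2 = 1" and b_sq: "b\<^sup>2 = (E1 - E0)\<^sup>2 * x\<^sup>2 * y\<^sup>2" and "b \<noteq> 0"
    and u: "u = - (E1 - E0) * y\<^sup>2 / b" and v: "v = (E1 - E0) * x\<^sup>2 / b"
  shows "(u * x)\<^sup>2 = y\<^sup>2" and "(v * y)\<^sup>2 = x\<^sup>2"
    and "(E0 - (E0 * y\<^sup>2 + E1 * x\<^sup>2)) * u = b" and "(E1 - (E0 * y\<^sup>2 + E1 * x\<^sup>2)) * v = b"
    and "u * x\<^sup>2 = - (v * y\<^sup>2)" and "(v * y\<^sup>2)\<^sup>2 = x\<^sup>2 * y\<^sup>2"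
proof -
  have ub: "u * b = - (E1 - E0) * y\<^sup>2" and vb: "v * b = (E1 - E0) * x\<^sup>2"
    using \<open>b \<noteq> 0\<close> u v by simp_all
  show "(u * x)\<^sup>2 = y\<^sup>2" "(v * y)\<^sup>2 = x\<^sup>2"
    "(E0 - (E0 * y\<^sup>2 + E1 * x\<^sup>2)) * u = b" "(E1 - (E0 * y\<^sup>2 + E1 * x\<^sup>2)) * v = b"
    "u * x\<^sup>2 = - (v * y\<^sup>2)" "(v * y\<^sup>2)\<^sup>2 = x\<^sup>2 * y\<^sup>2"
    using ub vb norm b_sq \<open>b \<noteq> 0\<close> by algebra+
qed

locale qubit_eigenbasis =
  fixes E0 E1 :: real and e0 e1 :: qubit
  assumes cinner_e0_e0: "cinner e0 e0 = 1" and cinner_e1_e1: "cinner e1 e1 = 1"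
    and cinner_e0_e1: "cinner e0 e1 = 0"
begin

abbreviation H :: "qubit \<Rightarrow> qubit" where
  "H \<equiv> hamiltonian E0 E1 e0 e1"

lemma cinner_e1_e0: "cinner e1 e0 = 0"
  using cinner_e0_e1 by (subst cinner_commute) simp

lemma cinner_comb:
  "cinner (a *s e0 + b *s e1) (c *s e0 + d *s e1) = cnj a * c + cnj b * d"
  by (simp add: cinner_add_left cinner_add_right cinner_smult_left cinner_smult_right
      cinner_e0_e0 cinner_e1_e1 cinner_e0_e1 cinner_e1_e0)

lemma cinner_e0_comb: "cinner e0 (c *s e0 + d *s e1) = c"
  using cinner_comb[of 1 0 c d] by simp

lemma cinner_e1_comb: "cinner e1 (c *s e0 + d *s e1) = d"
  using cinner_comb[of 0 1 c d] by simp

lemma hnorm_comb: "hnorm (a *s e0 + b *s e1) = sqrt ((cmod a)\<^sup>2 + (cmod b)\<^sup>2)"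
  by (simp add: hnorm_def cinner_comb cnj_mult_self)

lemma hamiltonian_comb:
  "H (a *s e0 + b *s e1) = (of_real E0 * a) *s e0 + (of_real E1 * b) *s e1"
  by (simp add: hamiltonian_def cinner_e0_comb cinner_e1_comb)

lemma hamiltonian_pow_comb:
  "(H ^^ n) (a *s e0 + b *s e1) = (of_real E0 ^ n * a) *s e0 + (of_real E1 ^ n * b) *s e1"
  by (induction n) (simp_all add: hamiltonian_comb mult.assoc)

lemma evolve_comb:
  "evolve H t (a *s e0 + b *s e1) =
    (exp (- \<i> * of_real (t * E0)) * a) *s e0 + (exp (- \<i> * of_real (t * E1)) * b) *s e1"
proof -
  let ?u = "\<lambda>n. (- \<i> * complex_of_real t) ^ n / of_nat (fact n)"
  have series: "(\<lambda>n. ?u n *s (H ^^ n) (a *s e0 + b *s e1)) =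
      (\<lambda>n. (?u n * (of_real E0 ^ n * a)) *s e0 + (?u n * (of_real E1 ^ n * b)) *s e1)"
    by (simp add: hamiltonian_pow_comb vec_eq_iff algebra_simps)
  have "(\<lambda>n. (?u n * (of_real E0 ^ n * a)) *s e0 + (?u n * (of_real E1 ^ n * b)) *s e1) sums
      ((exp (- \<i> * of_real (t * E0)) * a) *s e0 + (exp (- \<i> * of_real (t * E1)) * b) *s e1)"
    by (intro sums_add sums_vector_smult exp_series_scaled)
  with series show ?thesis
    unfolding evolve_def by (simp add: sums_iff)
qed

lemma expectation_hamiltonian_comb:
  "cinner (a *s e0 + b *s e1) (H (a *s e0 + b *s e1)) =
    of_real (E0 * (cmod a)\<^sup>2 + E1 * (cmod b)\<^sup>2)"
proof -
  have "cinner (a *s e0 + b *s e1) (H (a *s e0 + b *s e1)) =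
      of_real E0 * (cnj a * a) + of_real E1 * (cnj b * b)"
    by (simp add: hamiltonian_comb cinner_comb mult_ac)
  then show ?thesis
    by (simp add: cnj_mult_self)
qed

lemma lanczos_residual_comb:
  "lanczos_residual H (p *s e0 + q *s e1) (a *s e0 + b *s e1) \<beta> =
    (of_real (E0 - (E0 * (cmod a)\<^sup>2 + E1 * (cmod b)\<^sup>2)) * a - of_real \<beta> * p) *s e0
    + (of_real (E1 - (E0 * (cmod a)\<^sup>2 + E1 * (cmod b)\<^sup>2)) * b - of_real \<beta> * q) *s e1"
  unfolding lanczos_residual_def expectation_hamiltonian_comb
  unfolding hamiltonian_comb
  by (simp add: vec_eq_iff algebra_simps)

end

locale qubit_state = qubit_eigenbasis +
  fixes c0 c1 :: complex
  assumes normalized: "(cmod c0)\<^sup>2 + (cmod c1)\<^sup>2 = 1"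
begin

abbreviation psi :: qubit where
  "psi \<equiv> c0 *s e0 + c1 *s e1"

abbreviation \<omega> :: real where
  "\<omega> \<equiv> E1 - E0"

abbreviation b1 :: real where
  "b1 \<equiv> \<bar>\<omega>\<bar> * cmod c0 * cmod c1"

definition k1_coeff0 :: real where
  "k1_coeff0 = - \<omega> * (cmod c1)\<^sup>2 / b1"

definition k1_coeff1 :: real where
  "k1_coeff1 = \<omega> * (cmod c0)\<^sup>2 / b1"

definition k1 :: qubit where
  "k1 = (of_real k1_coeff0 * c0) *s e0 + (of_real k1_coeff1 * c1) *s e1"

lemma b1_sq: "b1\<^sup>2 = \<omega>\<^sup>2 * (cmod c0)\<^sup>2 * (cmod c1)\<^sup>2"
  by (simp add: power_mult_distrib)

lemma lanczos_residual_0: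
  "lanczos_residual H 0 psi 0 =
    (of_real (- \<omega> * (cmod c1)\<^sup>2) * c0) *s e0 + (of_real (\<omega> * (cmod c0)\<^sup>2) * c1) *s e1"
proof -
  have "E0 - (E0 * (cmod c0)\<^sup>2 + E1 * (cmod c1)\<^sup>2) = - \<omega> * (cmod c1)\<^sup>2"
    and "E1 - (E0 * (cmod c0)\<^sup>2 + E1 * (cmod c1)\<^sup>2) = \<omega> * (cmod c0)\<^sup>2"
    using normalized by algebra+
  moreover have "lanczos_residual H 0 psi 0 =
      (of_real (E0 - (E0 * (cmod c0)\<^sup>2 + E1 * (cmod c1)\<^sup>2)) * c0) *s e0
      + (of_real (E1 - (E0 * (cmod c0)\<^sup>2 + E1 * (cmod c1)\<^sup>2)) * c1) *s e1"
    using lanczos_residual_comb[of 0 0 c0 c1 0] by simp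
  ultimately show ?thesis
    by (simp only:)
qed

lemma hnorm_lanczos_residual_0: "hnorm (lanczos_residual H 0 psi 0) = b1"
proof -
  have "(\<omega> * (cmod c1)\<^sup>2 * cmod c0)\<^sup>2 + (\<omega> * (cmod c0)\<^sup>2 * cmod c1)\<^sup>2 = b1\<^sup>2"
    using normalized unfolding b1_sq by algebra
  then show ?thesis
    unfolding lanczos_residual_0 hnorm_comb cmod_of_real_mult
    by (simp add: power_mult_distrib power2_commute[of E0 E1] real_sqrt_mult)
qed

lemma lanczos_1_degenerate:
  assumes "b1 = 0"
  shows "lanczos H psi 1 = (psi, 0, 0)"
  using lanczos_Suc_eq[of H psi 0 0 psi 0 b1] hnorm_lanczos_residual_0 assms
  by (simp add: One_nat_def)

lemma lanczos_1:
  assumes "b1 \<noteq> 0"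
  shows "lanczos H psi 1 = (psi, k1, b1)"
proof -
  have "complex_of_real (1 / b1) *s lanczos_residual H 0 psi 0 =
      (of_real (1 / b1) * (of_real (- \<omega> * (cmod c1)\<^sup>2) * c0)) *s e0
      + (of_real (1 / b1) * (of_real (\<omega> * (cmod c0)\<^sup>2) * c1)) *s e1"
    unfolding lanczos_residual_0 by (simp only: vector_add_ldistrib vector_smult_assoc)
  also have "\<dots> = k1"
    unfolding k1_def k1_coeff0_def k1_coeff1_def by simp
  finally have "complex_of_real (1 / b1) *s lanczos_residual H 0 psi 0 = k1" .
  then show ?thesis
    using lanczos_Suc_eq[of H psi 0 0 psi 0 b1] hnorm_lanczos_residual_0 assms
    by (simp add: One_nat_def)
qed

lemma k1_coeffs:
  assumes "b1 \<noteq> 0"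
  shows "(k1_coeff0 * cmod c0)\<^sup>2 = (cmod c1)\<^sup>2" and "(k1_coeff1 * cmod c1)\<^sup>2 = (cmod c0)\<^sup>2"
    and "(E0 - (E0 * (cmod c1)\<^sup>2 + E1 * (cmod c0)\<^sup>2)) * k1_coeff0 = b1"
    and "(E1 - (E0 * (cmod c1)\<^sup>2 + E1 * (cmod c0)\<^sup>2)) * k1_coeff1 = b1"
    and "k1_coeff0 * (cmod c0)\<^sup>2 = - (k1_coeff1 * (cmod c1)\<^sup>2)"
    and "(k1_coeff1 * (cmod c1)\<^sup>2)\<^sup>2 = (cmod c0)\<^sup>2 * (cmod c1)\<^sup>2"
  using two_level_lanczos_coefficients[OF normalized b1_sq assms k1_coeff0_def k1_coeff1_def]
  by simp_all

lemma lanczos_residual_1: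
  assumes "b1 \<noteq> 0"
  shows "lanczos_residual H psi k1 b1 = 0"
proof -
  have "(cmod (of_real k1_coeff0 * c0))\<^sup>2 = (cmod c1)\<^sup>2"
    and "(cmod (of_real k1_coeff1 * c1))\<^sup>2 = (cmod c0)\<^sup>2"
    using k1_coeffs(1,2)[OF assms] by (simp_all add: cmod_of_real_mult power_mult_distrib)
  then have "lanczos_residual H psi k1 b1 =
      (of_real (E0 - (E0 * (cmod c1)\<^sup>2 + E1 * (cmod c0)\<^sup>2)) * (of_real k1_coeff0 * c0)
        - of_real b1 * c0) *s e0
      + (of_real (E1 - (E0 * (cmod c1)\<^sup>2 + E1 * (cmod c0)\<^sup>2)) * (of_real k1_coeff1 * c1)
        - of_real b1 * c1) *s e1"
    unfolding k1_def lanczos_residual_comb by (simp only:)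
  also have "\<dots> = 0"
    by (simp only: mult.assoc[symmetric] of_real_mult[symmetric] k1_coeffs(3,4)[OF assms]
        diff_self vector_smult_lzero add_0_right)
  finally show ?thesis .
qed

lemma krylov_eq_0_ge_2:
  assumes "2 \<le> n"
  shows "krylov H psi n = 0"
proof (cases "b1 = 0")
  case True
  then show ?thesis
    using krylov_eq_0_from[of H psi 1 psi n] lanczos_1_degenerate assms by simp
next
  case False
  then have "lanczos H psi (Suc 1) = (k1, 0, 0)"
    using lanczos_Suc_eq[OF lanczos_1[OF False]] lanczos_residual_1[OF False] by simp
  then show ?thesis
    using krylov_eq_0_from[of H psi "Suc 1" k1 n] assms by simp
qed

lemma cinner_k1_evolve:
  assumes "b1 \<noteq> 0"
  shows "cinner k1 (evolve H t psi) =
    of_real (k1_coeff1 * (cmod c1)\<^sup>2) * (exp (- \<i> * of_real (t * E1)) - exp (- \<i> * of_real (t * E0)))"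
  unfolding k1_def evolve_comb cinner_comb cnj_of_real_mult_mult k1_coeffs(5)[OF assms]
  by (simp add: algebra_simps)

lemma spread_complexity_eq:
  "spread_complexity H psi t = (2 * cmod c0 * cmod c1)\<^sup>2 * (sin (\<omega> * t / 2))\<^sup>2"
proof (cases "b1 = 0")
  case True
  then have "krylov H psi 1 = 0"
    using lanczos_1_degenerate by (simp add: krylov_def)
  then have "spread_complexity H psi t = 0"
    using spread_complexity_krylov_vanishing_from_2[of H psi, OF krylov_eq_0_ge_2] by (simp add: cinner_def)
  moreover have "(2 * cmod c0 * cmod c1)\<^sup>2 * (sin (\<omega> * t / 2))\<^sup>2 = 0"
    using True by auto
  ultimately show ?thesis
    by simp
next
  case False
  have "spread_complexity H psi t = (cmod (cinner k1 (evolve H t psi)))\<^sup>2"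
    using spread_complexity_krylov_vanishing_from_2[of H psi, OF krylov_eq_0_ge_2] lanczos_1[OF False]
    by (simp add: krylov_def)
  also have "\<dots> = (k1_coeff1 * (cmod c1)\<^sup>2)\<^sup>2 *
      (cmod (exp (- \<i> * of_real (t * E1)) - exp (- \<i> * of_real (t * E0))))\<^sup>2"
    by (simp only: cinner_k1_evolve[OF False] norm_mult norm_of_real power_mult_distrib power2_abs)
  also have "\<dots> = (cmod c0)\<^sup>2 * (cmod c1)\<^sup>2 * (4 * (sin ((t * E1 - t * E0) / 2))\<^sup>2)"
    by (simp only: k1_coeffs(6)[OF False] cmod_exp_diff_sq)
  also have "(t * E1 - t * E0) / 2 = \<omega> * t / 2"
    by (simp add: algebra_simps)
  finally show ?thesis
    by (simp add: power_mult_distrib mult_ac)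
qed

lemma l1_coherence_eq: "l1_coherence e0 e1 psi = 2 * cmod c0 * cmod c1"
  by (simp add: l1_coherence_def cinner_e0_comb cinner_e1_comb norm_mult)

end

theorem proposition3:
  fixes E0 E1 :: real and e0 e1 :: qubit and c0 c1 :: complex
  assumes "E0 \<noteq> E1"
    and "cinner e0 e0 = 1" and "cinner e1 e1 = 1" and "cinner e0 e1 = 0"
    and "(cmod c0)\<^sup>2 + (cmod c1)\<^sup>2 = 1"
  shows "\<forall>t::real.
    spread_complexity (hamiltonian E0 E1 e0 e1) (c0 *s e0 + c1 *s e1) t =
      (l1_coherence e0 e1 (c0 *s e0 + c1 *s e1))\<^sup>2 * (sin ((E1 - E0) * t / 2))\<^sup>2"
proof -
  interpret qubit_state E0 E1 e0 e1 c0 c1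
    by unfold_locales (fact assms)+
  show ?thesis
    by (simp add: spread_complexity_eq l1_coherence_eq)
qed

end
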